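(* Let $(V,\mathcal H,\iota,W)$ be an abelian functional theory with set of weights $\Omega$, let $F$ be a facet of $\mathrm{conv}(\Omega)$, and consider the restricted functional theory $(V,\mathcal H_F,\iota_F,\Pi_FW\Pi_F^\dagger)$ on $F$. Then: (1) the restricted theory is abelian; (2) $\Omega_F:=\Omega\cap F$ is its set of weights; (3) $\dim\iota_F^{-1}(\mathrm{span}\{\mathbb 1_F\})=\dim\iota^{-1}(\mathrm{span}\{\mathbb 1\})+1$; (4) for every pure state $\Gamma$ on $\mathcal H$, $\iota^*(\Gamma)\in F$ iff $\Gamma\in\mathcal P_F$; (5) for every density operator $\Gamma$ on $\mathcal H$, $\iota^*(\Gamma)\in F$ iff $\Gamma\in\mathcal E_F$; (6) $\mathcal F_p^{(F)}=\mathcal F_p|_F$; (7) $\mathcal F_e^{(F)}=\mathcal F_e|_F$.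
   Context: A generalized functional theory is a tuple $(V,\mathcal H,\iota,W)$ with $V$ a finite-dimensional real vector space, $\mathcal H$ a finite-dimensional complex Hilbert space, $\iota:V\to i\mathfrak u(\mathcal H)$ linear into the Hermitian operators, $W$ Hermitian; it is abelian if all $\iota(v)$ commute. States are regarded as linear functionals via the trace and $\iota^*$ is the dual map. Weights: $\alpha\in V^*$ with $\mathcal H_\alpha:=\{\psi:\iota(v)\psi=\langle\alpha,v\rangle\psi\ \forall v\}\ne0$; $\Omega$ is the set of weights, and $\mathrm{conv}(\Omega)$ is a convex polytope. For a facet $F$, $\mathcal H_F=\bigoplus_{\omega\in\Omega\cap F}\mathcal H_\omega$, $\Pi_F:\mathcal H\to\mathcal H_F$ the orthogonal projection, $\iota_F(v)=\Pi_F\iota(v)\Pi_F^\dagger$, $\mathbb 1_F$ the identity on $\mathcal H_F$; $\mathcal P_F,\mathcal E_F$ are the pure states and density operators on $\mathcal H_F$ (viewed as states on $\mathcal H$). For any theory, $\mathcal F_p(\rho)=\min\{\mathrm{Tr}(\Gamma W):\Gamma\text{ pure},\iota^*(\Gamma)=\rho\}$ and $\mathcal F_e(\rho)=\min\{\mathrm{Tr}(\Gamma W):\Gamma\text{ density operator},\iota^*(\Gamma)=\rho\}$; $\mathcal F_p^{(F)},\mathcal F_e^{(F)}$ denote those of the restricted theory. *)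

theory Defs
  imports "HOL-Analysis.Analysis"
begin

text \<open>Finite-dimensional complex Hilbert space H = complex^'n (standard inner product),
  operators on H = complex matrices complex^'n^'n.\<close>

definition cadj :: "complex^'n^'m \<Rightarrow> complex^'m^'n" where
  "cadj A = (\<chi> i j. cnj (A $ j $ i))"

definition herm :: "complex^'n^'n \<Rightarrow> bool" where
  "herm A \<longleftrightarrow> cadj A = A"

definition cnorm2 :: "complex^'n \<Rightarrow> real" where
  "cnorm2 x = (\<Sum>i\<in>UNIV. (cmod (x $ i))^2)"

definition qform :: "complex^'n^'n \<Rightarrow> complex^'n \<Rightarrow> complex" where
  "qform A x = (\<Sum>i\<in>UNIV. \<Sum>j\<in>UNIV. cnj (x $ i) * A $ i $ j * x $ j)"

definition ketbra :: "complex^'n \<Rightarrow> complex^'n^'n" where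
  "ketbra x = (\<chi> i j. x $ i * cnj (x $ j))"

definition pure_state :: "complex^'n^'n \<Rightarrow> bool" where
  "pure_state G \<longleftrightarrow> (\<exists>x. cnorm2 x = 1 \<and> G = ketbra x)"

definition density_op :: "complex^'n^'n \<Rightarrow> bool" where
  "density_op G \<longleftrightarrow> herm G \<and> (\<forall>x. qform G x \<in> \<real> \<and> 0 \<le> Re (qform G x)) \<and> trace G = 1"

text \<open>A generalized functional theory (V, H, iota, W): V = 'v (finite-dim. real space,
  its dual identified with 'v via the inner product), H = complex^'n,
  iota real-linear into Hermitian operators, W Hermitian.\<close>

definition functional_theory :: "('v::euclidean_space \<Rightarrow> complex^'n^'n) \<Rightarrow> complex^'n^'n \<Rightarrow> bool" where
  "functional_theory \<iota> W \<longleftrightarrow> linear \<iota> \<and> (\<forall>v. herm (\<iota> v)) \<and> herm W"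

definition abelian :: "('v::euclidean_space \<Rightarrow> complex^'n^'n) \<Rightarrow> bool" where
  "abelian \<iota> \<longleftrightarrow> (\<forall>v w. \<iota> v ** \<iota> w = \<iota> w ** \<iota> v)"

text \<open>dual map: <iota^*(G), v> = Tr(G iota(v))\<close>
definition iota_star :: "('v::euclidean_space \<Rightarrow> complex^'n^'n) \<Rightarrow> complex^'n^'n \<Rightarrow> 'v" where
  "iota_star \<iota> G = (\<Sum>b\<in>Basis. Re (trace (G ** \<iota> b)) *\<^sub>R b)"

definition weight_space :: "('v::euclidean_space \<Rightarrow> complex^'n^'n) \<Rightarrow> 'v \<Rightarrow> (complex^'n) set" where
  "weight_space \<iota> \<alpha> = {\<psi>. \<forall>v. \<iota> v *v \<psi> = complex_of_real (\<alpha> \<bullet> v) *s \<psi>}"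

definition weights :: "('v::euclidean_space \<Rightarrow> complex^'n^'n) \<Rightarrow> 'v set" where
  "weights \<iota> = {\<alpha>. weight_space \<iota> \<alpha> \<noteq> {0}}"

definition facet_space :: "('v::euclidean_space \<Rightarrow> complex^'n^'n) \<Rightarrow> 'v set \<Rightarrow> (complex^'n) set" where
  "facet_space \<iota> F = {(\<Sum>\<omega>\<in>weights \<iota> \<inter> F. \<psi> \<omega>) | \<psi>. \<forall>\<omega>\<in>weights \<iota> \<inter> F. \<psi> \<omega> \<in> weight_space \<iota> \<omega>}"

text \<open>F_p and F_e; the minimum over an empty set (rho not representable) is +infinity\<close>
definition Fp :: "('v::euclidean_space \<Rightarrow> complex^'n^'n) \<Rightarrow> complex^'n^'n \<Rightarrow> 'v \<Rightarrow> ereal" where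
  "Fp \<iota> W \<rho> = Inf {ereal (Re (trace (G ** W))) | G. pure_state G \<and> iota_star \<iota> G = \<rho>}"

definition Fe :: "('v::euclidean_space \<Rightarrow> complex^'n^'n) \<Rightarrow> complex^'n^'n \<Rightarrow> 'v \<Rightarrow> ereal" where
  "Fe \<iota> W \<rho> = Inf {ereal (Re (trace (G ** W))) | G. density_op G \<and> iota_star \<iota> G = \<rho>}"

end

theory Submission
  imports Defs
begin

(* Commuting Hermitian operators are simultaneously diagonalisable: H is the orthogonal sum of
  the weight spaces H_a, and iota(v) = sum_a <a,v> P_a with P_a the orthogonal projection onto
  H_a.  Hence iota^*(G) = sum_a Tr(G P_a) a is a convex combination of the weights.  The facet F
  is exposed by a functional that is maximal on Omega exactly at Omega \<inter> F, so iota^*(G) lies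
  in F iff Tr(G P_a) = 0 for every weight a outside F, i.e. iff G = Q G Q for
  Q = Pi_F^dagger Pi_F = sum_{a \<in> F} P_a.  Since Q commutes with iota, the compression by Pi_F
  is again abelian with weights Omega \<inter> F, and G' \<mapsto> Pi_F^dagger G' Pi_F maps the states on
  H_F onto the states G with iota^*(G) \<in> F, preserving iota^* and the energy.  Finally iota(v) is
  a multiple of the identity iff all weights take the same value at v; these v form a space of
  dimension dim V - aff_dim Omega, and aff_dim drops by one on a facet. *)

definition cinner :: "complex^'n \<Rightarrow> complex^'n \<Rightarrow> complex" where
  "cinner x y = (\<Sum>i\<in>UNIV. cnj (x $ i) * y $ i)"

lemma inner_cinner: "inner x y = Re (cinner x y)" for x y :: "complex^'n"
  by (simp add: inner_vec_def cinner_def inner_complex_def)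

lemma cinner_cadj: "cinner x (A *v y) = cinner (cadj A *v x) y"
proof -
  have "cinner x (A *v y) = (\<Sum>i\<in>UNIV. \<Sum>j\<in>UNIV. cnj (x$i) * A$i$j * y$j)"
    by (simp add: cinner_def matrix_vector_mult_def sum_distrib_left mult.assoc)
  also have "\<dots> = (\<Sum>j\<in>UNIV. \<Sum>i\<in>UNIV. cnj (x$i) * A$i$j * y$j)"
    by (rule sum.swap)
  also have "\<dots> = cinner (cadj A *v x) y"
    by (simp add: cinner_def matrix_vector_mult_def cadj_def sum_distrib_right sum_distrib_left
        mult_ac)
  finally show ?thesis .
qed

lemma cnj_cinner: "cnj (cinner x y) = cinner y x"
  by (simp add: cinner_def mult.commute)

lemma cinner_diff_right: "cinner x (y - z) = cinner x y - cinner x z"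
  by (simp add: cinner_def right_diff_distrib sum_subtractf)

lemma cinner_scaleC_right: "cinner x (c *s y) = c * cinner x y"
  by (simp add: cinner_def sum_distrib_left mult_ac)

lemma cinner_scaleC_left: "cinner (c *s x) y = cnj c * cinner x y"
  by (simp add: cinner_def sum_distrib_left mult_ac)

lemma cinner_zero_left [simp]: "cinner 0 x = 0"
  by (simp add: cinner_def)

lemma cinner_sum_left: "cinner (sum f S) x = (\<Sum>i\<in>S. cinner (f i) x)"
  by (induct S rule: infinite_finite_induct) (auto simp: cinner_def distrib_right sum.distrib)

lemma cinner_self: "cinner x x = complex_of_real (cnorm2 x)"
  unfolding cinner_def cnorm2_def of_real_sum
  by (rule sum.cong) (auto simp: complex_norm_square[symmetric] mult.commute)

lemma cnorm2_eq_0: "cnorm2 x = 0 \<longleftrightarrow> x = 0"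
  by (simp add: cnorm2_def sum_nonneg_eq_0_iff vec_eq_iff)

lemma cinner_self_eq_0: "cinner x x = 0 \<longleftrightarrow> x = 0"
  by (simp add: cinner_self cnorm2_eq_0)

lemma matrix_eq_cinner:
  fixes A B :: "complex^'n^'m"
  assumes "\<And>x y. cinner y (A *v x) = cinner y (B *v x)"
  shows "A = B"
proof -
  have "cinner (A *v x - B *v x) (A *v x - B *v x) = 0" for x
    by (simp add: cinner_diff_right assms)
  then show ?thesis by (simp add: cinner_self_eq_0 matrix_eq)
qed

lemma cadj_cadj [simp]: "cadj (cadj A) = A"
  by (simp add: cadj_def vec_eq_iff)

lemma cadj_mult: "cadj (A ** B) = cadj B ** cadj A"
  by (simp add: cadj_def matrix_matrix_mult_def vec_eq_iff mult.commute)

lemma cadj_diff: "cadj (A - B) = cadj A - cadj B"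
  by (simp add: cadj_def vec_eq_iff)

lemma cadj_scaleR: "cadj (r *\<^sub>R A) = r *\<^sub>R cadj A"
  by (simp add: cadj_def vec_eq_iff)

lemma cadj_mat_1 [simp]: "cadj (mat 1) = mat 1"
  by (simp add: cadj_def vec_eq_iff mat_def)

lemma cadj_add: "cadj (A + B) = cadj A + cadj B"
  by (simp add: cadj_def vec_eq_iff)

lemma cadj_zero [simp]: "cadj 0 = 0"
  by (simp add: cadj_def vec_eq_iff)

lemma cadj_sum: "cadj (sum f S) = (\<Sum>i\<in>S. cadj (f i))"
  by (induct S rule: infinite_finite_induct) (auto simp: cadj_add)

lemma herm_cinner: "herm A \<Longrightarrow> cinner x (A *v y) = cinner (A *v x) y"
  by (metis cinner_cadj herm_def)

lemma herm_inner: "herm A \<Longrightarrow> inner x (A *v y) = inner (A *v x) y"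
  by (simp add: inner_cinner herm_cinner)

lemma herm_sandwich: "herm G \<Longrightarrow> herm (A ** G ** cadj A)"
  by (simp add: herm_def cadj_mult matrix_mul_assoc)

lemma herm_sandwich_cadj: "herm G \<Longrightarrow> herm (cadj A ** G ** A)"
  using herm_sandwich[of G "cadj A"] by simp

lemma herm_eq_if_mutually_absorbing:
  assumes "herm A" "herm B" "A ** B = B" "B ** A = A"
  shows "A = B"
proof -
  have "A = cadj (cadj A ** cadj B)" using assms(4) by (simp add: cadj_mult)
  also have "\<dots> = B" using assms(1-3) by (simp add: herm_def)
  finally show ?thesis .
qed

lemma scaleR_eq_of_real_scaleC: "r *\<^sub>R x = complex_of_real r *s x" for x :: "complex^'n"
  by (simp add: vec_eq_iff) (simp add: scaleR_conv_of_real)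

lemma matrix_vector_mult_scaleR_right: "A *v (r *\<^sub>R x) = r *\<^sub>R (A *v x)" for A :: "complex^'n^'m"
  using linear_iff matrix_vector_mul_linear by blast

lemma matrix_vector_mult_scaleR_left: "(r *\<^sub>R A) *v x = r *\<^sub>R (A *v x)" for A :: "complex^'n^'m"
  by (simp add: matrix_vector_mult_def vec_eq_iff scaleR_sum_right)

lemma matrix_mult_scaleR_right: "A ** (r *\<^sub>R B) = r *\<^sub>R (A ** B)" for A :: "complex^'n^'m"
  by (simp add: matrix_scalar_ac scalar_matrix_assoc)

lemma matrix_add_rdistrib: "(B + C) ** A = B ** A + C ** A" for A :: "complex^'n^'m"
  by (simp add: matrix_matrix_mult_def vec_eq_iff distrib_right sum.distrib)

lemma matrix_mult_sum_right: "A ** sum f S = (\<Sum>i\<in>S. A ** f i)" for A :: "complex^'n^'m"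
  by (induct S rule: infinite_finite_induct) (auto simp: matrix_add_ldistrib)

lemma matrix_mult_sum_left: "sum f S ** A = (\<Sum>i\<in>S. f i ** A)" for A :: "complex^'n^'m"
  by (induct S rule: infinite_finite_induct) (auto simp: matrix_add_rdistrib)

lemma matrix_vector_mult_sum_left: "sum f S *v x = (\<Sum>i\<in>S. f i *v x)" for x :: "complex^'n"
  by (induct S rule: infinite_finite_induct) (auto simp: matrix_vector_mult_add_rdistrib)

lemma matrix_vector_mult_sum_right: "A *v sum f S = (\<Sum>i\<in>S. A *v f i)" for A :: "complex^'n^'m"
  by (induct S rule: infinite_finite_induct) (auto simp: matrix_vector_right_distrib)

lemma matrix_vector_mult_axis: "(A *v axis k 1) $ i = A $ i $ k"
  by (simp add: matrix_vector_mult_def axis_def if_distrib cong: if_cong)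

lemma mat_1_neq_0: "mat 1 \<noteq> (0::complex^'n^'n)"
proof
  assume "mat 1 = (0::complex^'n^'n)"
  then have "(mat 1 :: complex^'n^'n) $ i $ i = 0" for i by simp
  then show False by (simp add: mat_def)
qed

lemma trace_scaleR: "trace (r *\<^sub>R A) = complex_of_real r * trace A" for A :: "complex^'n^'n"
  by (simp add: trace_def sum_distrib_left) (simp add: scaleR_conv_of_real)

lemma trace_sum: "trace (sum f S) = (\<Sum>i\<in>S. trace (f i))" for f :: "_ \<Rightarrow> complex^'n^'n"
  by (induct S rule: infinite_finite_induct) (auto simp: trace_add trace_0[simplified])

lemma trace_sandwich_cycle:
  fixes Pj :: "complex^'n^'m" and G :: "complex^'m^'m" and X :: "complex^'n^'n"
  shows "trace (cadj Pj ** G ** Pj ** X) = trace (G ** (Pj ** X ** cadj Pj))"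
proof -
  have "trace (cadj Pj ** G ** Pj ** X) = trace (cadj Pj ** (G ** Pj ** X))"
    by (simp add: matrix_mul_assoc)
  also have "\<dots> = trace ((G ** Pj ** X) ** cadj Pj)" by (rule trace_mul_sym)
  finally show ?thesis by (simp add: matrix_mul_assoc)
qed

lemma qform_cinner: "qform G x = cinner x (G *v x)"
  by (simp add: qform_def cinner_def matrix_vector_mult_def sum_distrib_left mult_ac)

lemma qform_sandwich: "qform (cadj A ** G ** A) x = qform G (A *v x)"
  by (simp add: qform_cinner cinner_cadj matrix_vector_mul_assoc[symmetric])

lemma density_op_inner_nonneg: "density_op G \<Longrightarrow> 0 \<le> inner z (G *v z)"
  by (simp add: density_op_def inner_cinner qform_cinner[symmetric])

lemma trace_sandwich: "trace (cadj A ** G ** A) = (\<Sum>k\<in>UNIV. qform G (A *v axis k 1))"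
proof -
  have "trace (cadj A ** G ** A) = (\<Sum>k\<in>UNIV. \<Sum>j\<in>UNIV. \<Sum>i\<in>UNIV. cnj (A$i$k) * G$i$j * A$j$k)"
    by (simp add: trace_def cadj_def matrix_matrix_mult_def sum_distrib_right)
  also have "\<dots> = (\<Sum>k\<in>UNIV. \<Sum>i\<in>UNIV. \<Sum>j\<in>UNIV. cnj (A$i$k) * G$i$j * A$j$k)"
    by (rule sum.cong[OF refl], rule sum.swap)
  also have "\<dots> = (\<Sum>k\<in>UNIV. qform G (A *v axis k 1))"
    by (simp add: qform_def matrix_vector_mult_axis)
  finally show ?thesis .
qed

lemma ketbra_mult_vector: "ketbra x *v y = cinner x y *s x"
  by (simp add: ketbra_def cinner_def matrix_vector_mult_def vec_eq_iff sum_distrib_left mult_ac)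

lemma trace_ketbra_mult: "trace (ketbra x ** A) = cinner x (A *v x)"
proof -
  have "trace (ketbra x ** A) = (\<Sum>i\<in>UNIV. \<Sum>j\<in>UNIV. x$i * cnj (x$j) * A$j$i)"
    by (simp add: trace_def ketbra_def matrix_matrix_mult_def)
  also have "\<dots> = (\<Sum>j\<in>UNIV. \<Sum>i\<in>UNIV. x$i * cnj (x$j) * A$j$i)"
    by (rule sum.swap)
  also have "\<dots> = cinner x (A *v x)"
    by (simp add: cinner_def matrix_vector_mult_def sum_distrib_left mult.commute mult.left_commute)
  finally show ?thesis .
qed

lemma trace_ketbra: "trace (ketbra x) = complex_of_real (cnorm2 x)"
  using trace_ketbra_mult[of x "mat 1"] by (simp add: cinner_self)

lemma ketbra_sandwich: "A ** ketbra x ** cadj A = ketbra (A *v x)"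
proof -
  have "(A ** ketbra x ** cadj A) $ i $ k = (A *v x) $ i * cnj ((A *v x) $ k)" for i k
  proof -
    have "(A ** ketbra x ** cadj A) $ i $ k
        = (\<Sum>l\<in>UNIV. \<Sum>j\<in>UNIV. A$i$j * x$j * cnj (x$l) * cnj (A$k$l))"
      by (simp add: ketbra_def cadj_def matrix_matrix_mult_def sum_distrib_right mult.assoc)
    also have "\<dots> = (\<Sum>j\<in>UNIV. \<Sum>l\<in>UNIV. A$i$j * x$j * cnj (x$l) * cnj (A$k$l))"
      by (rule sum.swap)
    also have "\<dots> = (\<Sum>j\<in>UNIV. A$i$j * x$j) * (\<Sum>l\<in>UNIV. cnj (x$l) * cnj (A$k$l))"
      by (simp add: sum_product mult.assoc)
    finally show ?thesis by (simp add: matrix_vector_mult_def mult.commute)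
  qed
  then show ?thesis by (simp add: ketbra_def vec_eq_iff)
qed

lemma qform_ketbra: "qform (ketbra x) y = complex_of_real ((cmod (cinner x y))^2)"
proof -
  have "qform (ketbra x) y = cinner x y * cnj (cinner x y)"
    by (simp add: qform_cinner ketbra_mult_vector cinner_scaleC_right cnj_cinner)
  then show ?thesis by (simp only: complex_norm_square)
qed

lemma herm_ketbra: "herm (ketbra x)"
  by (simp add: herm_def ketbra_def cadj_def vec_eq_iff mult.commute)

lemma pure_state_imp_density_op: "pure_state G \<Longrightarrow> density_op G"
  by (auto simp: pure_state_def density_op_def herm_ketbra qform_ketbra trace_ketbra)

lemma cnorm2_cadj_coisometry:
  assumes "Pj ** cadj Pj = mat 1"
  shows "cnorm2 (cadj Pj *v x) = cnorm2 x"
proof -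
  have "cinner (cadj Pj *v x) (cadj Pj *v x) = cinner x x"
    using assms by (simp add: cinner_cadj[symmetric] matrix_vector_mul_assoc)
  then show ?thesis by (simp add: cinner_self)
qed

lemma trace_lift_coisometry:
  assumes "Pj ** cadj Pj = mat 1"
  shows "trace (cadj Pj ** G ** Pj) = trace G"
  using trace_sandwich_cycle[of Pj G "mat 1"] assms by simp

lemma pure_state_lift_coisometry:
  assumes "Pj ** cadj Pj = mat 1" and "pure_state G"
  shows "pure_state (cadj Pj ** G ** Pj)"
proof -
  obtain x where x: "cnorm2 x = 1" "G = ketbra x" using assms(2) by (auto simp: pure_state_def)
  then have "cadj Pj ** G ** Pj = ketbra (cadj Pj *v x)"
    using ketbra_sandwich[of "cadj Pj" x] by simp
  then show ?thesis using x(1) cnorm2_cadj_coisometry[OF assms(1)] unfolding pure_state_def by metis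
qed

lemma density_op_lift_coisometry:
  "Pj ** cadj Pj = mat 1 \<Longrightarrow> density_op G \<Longrightarrow> density_op (cadj Pj ** G ** Pj)"
  unfolding density_op_def by (simp add: herm_sandwich_cadj qform_sandwich trace_lift_coisometry)

lemma iota_star_compression:
  "iota_star (\<lambda>v. Pj ** \<iota> v ** cadj Pj) G = iota_star \<iota> (cadj Pj ** G ** Pj)"
  unfolding iota_star_def trace_sandwich_cycle ..

section \<open>Simultaneous eigenvectors of commuting Hermitian matrices\<close>

lemma linear_coeff_zero_if_quadratic_nonneg:
  fixes c d :: real
  assumes nonneg: "\<And>t. 0 \<le> 2*t*c + t^2*d" and "0 \<le> d"
  shows "c = 0"
proof (rule ccontr)
  assume "c \<noteq> 0"
  define t where "t = - c / (d + 1)"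
  have td: "t * (d + 1) = - c" using \<open>0 \<le> d\<close> by (simp add: t_def)
  have "(d + 1)^2 * (2*t*c + t^2*d) = 2*c*(t*(d + 1))*(d + 1) + (t*(d + 1))^2 * d"
    by (simp add: algebra_simps power2_eq_square)
  also have "\<dots> = - (c^2 * (d + 2))" unfolding td by (simp add: algebra_simps power2_eq_square)
  also have "\<dots> < 0" using \<open>c \<noteq> 0\<close> \<open>0 \<le> d\<close> by simp
  finally show False using nonneg[of t] \<open>0 \<le> d\<close> by (simp add: mult_less_0_iff)
qed

lemma psd_kernel_if_inner_zero:
  fixes B :: "complex^'n^'n"
  assumes hB: "herm B" and U: "subspace U" and inv: "\<And>z. z \<in> U \<Longrightarrow> B *v z \<in> U"
    and psd: "\<And>z. z \<in> U \<Longrightarrow> 0 \<le> inner z (B *v z)"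
    and x: "x \<in> U" and x0: "inner x (B *v x) = 0"
  shows "B *v x = 0"
proof -
  define y where "y = B *v x"
  have yU: "y \<in> U" using inv x y_def by auto
  have sym: "inner x (B *v y) = inner y (B *v x)"
    using herm_inner[OF hB, of x y] by (simp add: inner_commute)
  have "0 \<le> 2*t*(inner y y) + t^2*(inner y (B *v y))" for t
  proof -
    have "x + t *\<^sub>R y \<in> U" using U x yU by (simp add: subspace_add subspace_scale)
    then have "0 \<le> inner (x + t *\<^sub>R y) (B *v (x + t *\<^sub>R y))" by (rule psd)
    also have "\<dots> = inner x (B *v x) + t * inner x (B *v y) + t * inner y (B *v x)
        + t^2 * inner y (B *v y)"
      by (simp add: matrix_vector_right_distrib matrix_vector_mult_scaleR_right inner_add_left
          inner_add_right power2_eq_square algebra_simps)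
    also have "\<dots> = 2*t*(inner y y) + t^2*(inner y (B *v y))"
      using x0 sym y_def by simp
    finally show ?thesis .
  qed
  from linear_coeff_zero_if_quadratic_nonneg[OF this psd[OF yU]] show ?thesis
    by (simp add: y_def)
qed

lemma rayleigh_quotient_maximiser:
  fixes A :: "complex^'n^'n"
  assumes U: "subspace U" and x1: "x1 \<in> U" "x1 \<noteq> 0"
  shows "\<exists>x0\<in>U. norm x0 = 1 \<and> (\<forall>z\<in>U. inner z (A *v z) \<le> inner x0 (A *v x0) * inner z z)"
proof -
  define S where "S = U \<inter> sphere 0 1"
  define f where "f z = inner z (A *v z)" for z
  have "compact S"
    unfolding S_def by (rule closed_Int_compact) (auto simp: closed_subspace U)
  have "(1 / norm x1) *\<^sub>R x1 \<in> S" unfolding S_def using x1 U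
    by (simp add: subspace_scale)
  then have "S \<noteq> {}" by auto
  have "continuous_on S f" unfolding f_def
    by (intro continuous_intros linear_continuous_on linear_conv_bounded_linear[THEN iffD1]) auto
  from continuous_attains_sup[OF \<open>compact S\<close> \<open>S \<noteq> {}\<close> this]
  obtain x0 where x0: "x0 \<in> S" and max: "\<And>y. y \<in> S \<Longrightarrow> f y \<le> f x0" by blast
  have "f z \<le> f x0 * inner z z" if "z \<in> U" for z
  proof (cases "z = 0")
    case True then show ?thesis by (simp add: f_def)
  next
    case False
    have "(1 / norm z) *\<^sub>R z \<in> S" unfolding S_def using that False U
      by (simp add: subspace_scale)
    then have "f ((1 / norm z) *\<^sub>R z) \<le> f x0" by (rule max)
    moreover have "f (c *\<^sub>R z) = c^2 * f z" for c
      by (simp add: f_def matrix_vector_mult_scaleR_right power2_eq_square)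
    ultimately have "f z / (norm z)^2 \<le> f x0" by (simp add: power_divide)
    then show ?thesis
      using False by (simp add: divide_le_eq power2_norm_eq_inner[symmetric] mult.commute)
  qed
  then show ?thesis using x0 unfolding S_def f_def by auto
qed

text \<open>At a maximiser x0 of the Rayleigh quotient on U, the form of M - A with M = <x0, A x0>
  is positive semidefinite on U and vanishes at x0.\<close>

lemma herm_invariant_subspace_eigenvector:
  fixes A :: "complex^'n^'n"
  assumes hA: "herm A" and U: "subspace U" and x1: "x1 \<in> U" "x1 \<noteq> 0"
    and inv: "\<And>z. z \<in> U \<Longrightarrow> A *v z \<in> U"
  shows "\<exists>x\<in>U. x \<noteq> 0 \<and> (\<exists>l::real. A *v x = l *\<^sub>R x)"
proof -
  obtain x0 where x0: "x0 \<in> U" "norm x0 = 1"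
    and bound: "\<And>z. z \<in> U \<Longrightarrow> inner z (A *v z) \<le> inner x0 (A *v x0) * inner z z"
    using rayleigh_quotient_maximiser[OF U x1] by blast
  define M where "M = inner x0 (A *v x0)"
  define B where "B = M *\<^sub>R mat 1 - A"
  have Bv: "B *v z = M *\<^sub>R z - A *v z" for z
    by (simp add: B_def matrix_vector_mult_diff_rdistrib matrix_vector_mult_scaleR_left)
  have "B *v x0 = 0"
  proof (rule psd_kernel_if_inner_zero[OF _ U _ _ x0(1)])
    show "herm B" using hA unfolding B_def herm_def by (simp add: cadj_diff cadj_scaleR)
    show "B *v z \<in> U" if "z \<in> U" for z
      using that inv U by (simp add: Bv subspace_diff subspace_scale)
    show "0 \<le> inner z (B *v z)" if "z \<in> U" for z
      using bound[OF that] by (simp add: Bv inner_diff_right M_def)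
    show "inner x0 (B *v x0) = 0"
      using x0(2) by (simp add: Bv inner_diff_right M_def power2_norm_eq_inner[symmetric])
  qed
  then have "A *v x0 = M *\<^sub>R x0" by (simp add: Bv)
  then show ?thesis using x0 by (intro bexI[of _ x0]) auto
qed

lemma commuting_herm_common_eigenvector:
  fixes B :: "(complex^'n^'n) set"
  assumes "finite B" and "\<forall>A\<in>B. herm A" and "\<forall>A\<in>B. \<forall>C\<in>B. A ** C = C ** A"
    and "subspace U" and "x1 \<in> U" and "x1 \<noteq> 0" and "\<forall>A\<in>B. \<forall>z\<in>U. A *v z \<in> U"
  shows "\<exists>x\<in>U. x \<noteq> 0 \<and> (\<forall>A\<in>B. \<exists>l::real. A *v x = l *\<^sub>R x)"
  using assms
proof (induction B arbitrary: U x1 rule: finite_induct)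
  case empty
  then show ?case by auto
next
  case (insert A B)
  obtain x0 l where x0: "x0 \<in> U" "x0 \<noteq> 0" and l: "A *v x0 = l *\<^sub>R x0"
    using herm_invariant_subspace_eigenvector[of A U x1] insert.prems by auto
  define U' where "U' = {z \<in> U. A *v z = l *\<^sub>R z}"
  have "subspace U'" using insert.prems(3)
    unfolding U'_def subspace_def
    by (auto simp: matrix_vector_right_distrib matrix_vector_mult_scaleR_right scaleR_add_right)
  moreover have "x0 \<in> U'" using x0 l U'_def by auto
  moreover have "\<forall>C\<in>B. \<forall>z\<in>U'. C *v z \<in> U'"
  proof (intro ballI)
    fix C z assume C: "C \<in> B" and z: "z \<in> U'"
    have AC: "A ** C = C ** A" using insert.prems(2) C by blast
    have "A *v (C *v z) = (C ** A) *v z" by (simp only: matrix_vector_mul_assoc AC)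
    also have "\<dots> = l *\<^sub>R (C *v z)"
      using z by (simp add: U'_def matrix_vector_mul_assoc[symmetric]
          matrix_vector_mult_scaleR_right)
    finally show "C *v z \<in> U'" using insert.prems(6) C z U'_def by auto
  qed
  moreover have "\<forall>C\<in>B. herm C" "\<forall>C\<in>B. \<forall>D\<in>B. C ** D = D ** C"
    using insert.prems(1,2) by blast+
  ultimately obtain x where "x \<in> U'" "x \<noteq> 0" "\<forall>C\<in>B. \<exists>l::real. C *v x = l *\<^sub>R x"
    using insert.IH[of U' x0] x0(2) by blast
  then show ?case using l U'_def by auto
qed

section \<open>Faces of polytopes\<close>

lemma face_of_convex_hull_finite:
  fixes S :: "'a::euclidean_space set"
  assumes "finite S" and "F face_of convex hull S"
  shows "convex hull (S \<inter> F) = F"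
proof -
  obtain S' where S': "S' \<subseteq> S" "F = convex hull S'"
    using face_of_convex_hull_subset[OF finite_imp_compact[OF assms(1)] assms(2)] by blast
  then have "S' \<subseteq> S \<inter> F" by (auto simp: hull_subset[of S'])
  then have "F \<subseteq> convex hull (S \<inter> F)" using S'(2) by (simp add: hull_mono)
  moreover have "convex hull (S \<inter> F) \<subseteq> F"
    using face_of_imp_convex[OF assms(2)] by (intro hull_minimal) auto
  ultimately show ?thesis by blast
qed

lemma aff_dim_facet_of_convex_hull:
  fixes S :: "'a::euclidean_space set"
  assumes "finite S" and "F facet_of convex hull S"
  shows "aff_dim (S \<inter> F) = aff_dim S - 1"
proof -
  have "aff_dim (S \<inter> F) = aff_dim F"
    using face_of_convex_hull_finite[OF assms(1) facet_of_imp_face_of[OF assms(2)]]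
    by (metis aff_dim_convex_hull)
  also have "\<dots> = aff_dim S - 1" using assms(2) by (simp add: facet_of_def aff_dim_convex_hull)
  finally show ?thesis .
qed

text \<open>Faces of polytopes are exposed, and a supporting functional is maximal on \<open>S\<close>
  exactly at the points of the face.\<close>

lemma convex_combination_in_face_iff:
  fixes S :: "'a::euclidean_space set"
  assumes S: "finite S" and face: "F face_of convex hull S"
    and p: "\<And>a. a \<in> S \<Longrightarrow> 0 \<le> p a" "sum p S = 1"
  shows "(\<Sum>a\<in>S. p a *\<^sub>R a) \<in> F \<longleftrightarrow> (\<forall>a\<in>S - F. p a = 0)"
proof -
  have "polyhedron (convex hull S)"
    using S by (auto simp: polytope_def intro!: polytope_imp_polyhedron)
  then have "F exposed_face_of convex hull S"
    using face by (simp add: exposed_face_of_polyhedron)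
  then obtain h \<beta> where le: "convex hull S \<subseteq> {x. h \<bullet> x \<le> \<beta>}"
    and F: "F = convex hull S \<inter> {x. h \<bullet> x = \<beta>}"
    by (auto simp: exposed_face_of_def)
  have le_a: "h \<bullet> a \<le> \<beta>" and F_a: "a \<in> F \<longleftrightarrow> h \<bullet> a = \<beta>" if "a \<in> S" for a
    using le F hull_inc[OF that] by auto
  define \<rho> where "\<rho> = (\<Sum>a\<in>S. p a *\<^sub>R a)"
  have "\<rho> \<in> convex hull S"
    unfolding \<rho>_def using p by (intro convex_sum[OF S convex_convex_hull]) (auto intro: hull_inc)
  moreover have "\<beta> - h \<bullet> \<rho> = (\<Sum>a\<in>S. p a * (\<beta> - h \<bullet> a))"
    using p(2) by (simp add: \<rho>_def inner_sum_right right_diff_distrib sum_subtractf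
        sum_distrib_right[symmetric])
  ultimately have "\<rho> \<in> F \<longleftrightarrow> (\<Sum>a\<in>S. p a * (\<beta> - h \<bullet> a)) = 0"
    by (auto simp: F)
  also have "\<dots> \<longleftrightarrow> (\<forall>a\<in>S. p a * (\<beta> - h \<bullet> a) = 0)"
    using p(1) le_a by (intro sum_nonneg_eq_0_iff[OF S]) simp
  also have "\<dots> \<longleftrightarrow> (\<forall>a\<in>S - F. p a = 0)"
    using F_a by auto
  finally show ?thesis unfolding \<rho>_def .
qed

lemma dim_inner_constant_on:
  fixes S :: "'v::euclidean_space set"
  assumes "S \<noteq> {}"
  shows "int (dim {v. \<exists>c. \<forall>a\<in>S. a \<bullet> v = c}) = int DIM('v) - aff_dim S"
proof -
  obtain s0 where s0: "s0 \<in> S" using assms by blast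
  define T where "T = (\<lambda>x. x - s0) ` S"
  have K: "{v. \<exists>c. \<forall>a\<in>S. a \<bullet> v = c} = {y. \<forall>x\<in>span T. orthogonal x y}"
  proof (intro set_eqI iffI)
    fix v assume "v \<in> {v. \<exists>c. \<forall>a\<in>S. a \<bullet> v = c}"
    then obtain c where c: "\<And>a. a \<in> S \<Longrightarrow> a \<bullet> v = c" by blast
    have "orthogonal v y" if "y \<in> T" for y
      using that c s0 by (auto simp: T_def orthogonal_def inner_diff_right inner_commute)
    then have "orthogonal v x" if "x \<in> span T" for x
      using orthogonal_to_span[OF that] by blast
    then show "v \<in> {y. \<forall>x\<in>span T. orthogonal x y}"
      by (simp add: orthogonal_commute)
  next
    fix y assume y: "y \<in> {y. \<forall>x\<in>span T. orthogonal x y}"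
    have "a \<bullet> y = s0 \<bullet> y" if "a \<in> S" for a
    proof -
      have "a - s0 \<in> span T" using that by (auto simp: T_def intro: span_base)
      then have "(a - s0) \<bullet> y = 0" using y by (simp add: orthogonal_def)
      then show ?thesis by (simp add: inner_diff_left)
    qed
    then show "y \<in> {v. \<exists>c. \<forall>a\<in>S. a \<bullet> v = c}" by blast
  qed
  have "dim {y. \<forall>x\<in>span T. orthogonal x y} + dim (span T) = dim (UNIV::'v set)"
    using dim_subspace_orthogonal_to_vectors[of "span T" UNIV] by (simp add: subspace_span)
  moreover have "aff_dim S = int (dim T)"
    unfolding T_def by (rule aff_dim_eq_dim_subtract[OF hull_inc[OF s0]])
  ultimately show ?thesis using K by (simp add: dim_span dim_UNIV)
qed

section \<open>Weight decomposition of an abelian family\<close>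

locale abelian_hermitian_map =
  fixes \<iota> :: "'v::euclidean_space \<Rightarrow> complex^'n^'n"
  assumes linear_iota: "linear \<iota>" and herm_iota: "\<And>v. herm (\<iota> v)" and abelian_iota: "abelian \<iota>"
begin

abbreviation H where "H \<equiv> weight_space \<iota>"
abbreviation \<Omega> where "\<Omega> \<equiv> weights \<iota>"

lemma iota_commute: "\<iota> v ** \<iota> w = \<iota> w ** \<iota> v"
  using abelian_iota by (simp add: abelian_def)

lemma iota_expansion: "\<iota> v = (\<Sum>b\<in>Basis. (v \<bullet> b) *\<^sub>R \<iota> b)"
proof -
  have "\<iota> v = \<iota> (\<Sum>b\<in>Basis. (v \<bullet> b) *\<^sub>R b)" by (simp add: euclidean_representation)
  then show ?thesis by (simp add: linear_sum[OF linear_iota] linear_cmul[OF linear_iota])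
qed

lemma weight_space_iff: "x \<in> H a \<longleftrightarrow> (\<forall>v. \<iota> v *v x = complex_of_real (a \<bullet> v) *s x)"
  by (simp add: weight_space_def)

lemma weight_space_scaleC: "x \<in> H a \<Longrightarrow> c *s x \<in> H a"
  by (simp add: weight_space_iff vector_scalar_commute vector_smult_assoc mult.commute)

lemma subspace_weight_space: "subspace (H a)"
  unfolding subspace_def
  by (auto simp: weight_space_iff matrix_vector_right_distrib vector_add_ldistrib
      vector_scalar_commute scaleR_eq_of_real_scaleC vector_smult_assoc mult.commute)

lemma zero_in_weight_space: "0 \<in> H a"
  using subspace_weight_space subspace_0 by blast

lemma weight_spaces_orthogonal:
  assumes "x \<in> H a" and "y \<in> H b" and "a \<noteq> b"
  shows "cinner x y = 0"
proof -
  have "cinner x (\<iota> (a - b) *v y) = cinner (\<iota> (a - b) *v x) y" by (rule herm_cinner[OF herm_iota])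
  then have "complex_of_real (b \<bullet> (a - b)) * cinner x y = complex_of_real (a \<bullet> (a - b)) * cinner
      x y"
    using assms by (simp add: weight_space_iff cinner_scaleC_right cinner_scaleC_left)
  moreover have "a \<bullet> (a - b) - b \<bullet> (a - b) \<noteq> 0"
    using assms(3) by (simp add: inner_diff_left[symmetric])
  ultimately show ?thesis by auto
qed

lemma weights_iff: "a \<in> \<Omega> \<longleftrightarrow> (\<exists>x\<in>H a. x \<noteq> 0)"
  using zero_in_weight_space by (auto simp: weights_def)

text \<open>Nonzero vectors of distinct weights are orthogonal, hence independent.\<close>

lemma finite_weights: "finite \<Omega>"
proof -
  obtain f where f: "\<And>a. a \<in> \<Omega> \<Longrightarrow> f a \<in> H a \<and> f a \<noteq> 0"
    using weights_iff by metis
  have orth: "a \<noteq> b \<Longrightarrow> orthogonal (f a) (f b)" if "a \<in> \<Omega>" "b \<in> \<Omega>" for a b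
    using weight_spaces_orthogonal[of "f a" a "f b" b] f that by (simp add: orthogonal_def
        inner_cinner)
  have "inj_on f \<Omega>"
  proof (rule inj_onI)
    fix a b assume "a \<in> \<Omega>" "b \<in> \<Omega>" "f a = f b"
    then show "a = b" using orth[of a b] f by (auto simp: orthogonal_self)
  qed
  moreover have "pairwise orthogonal (f ` \<Omega>)"
    using orth by (auto simp: pairwise_def)
  then have "independent (f ` \<Omega>)"
    using f by (intro pairwise_orthogonal_independent) auto
  then have "finite (f ` \<Omega>)" by (rule independent_imp_finite)
  ultimately show ?thesis using finite_imageD by blast
qed

lemma weight_vector_in_invariant_subspace:
  assumes U: "subspace U" and x1: "x1 \<in> U" "x1 \<noteq> 0"
    and inv: "\<And>v z. z \<in> U \<Longrightarrow> \<iota> v *v z \<in> U"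
  shows "\<exists>x\<in>U. x \<noteq> 0 \<and> (\<exists>a. x \<in> H a)"
proof -
  have "\<exists>x\<in>U. x \<noteq> 0 \<and> (\<forall>A\<in>\<iota> ` Basis. \<exists>l::real. A *v x = l *\<^sub>R x)"
    by (rule commuting_herm_common_eigenvector) (use U x1 inv herm_iota iota_commute in auto)
  then obtain x where xU: "x \<in> U" and x0: "x \<noteq> 0"
    and "\<forall>b\<in>Basis. \<exists>l::real. \<iota> b *v x = l *\<^sub>R x" by auto
  then obtain lf where lf: "\<And>b. b \<in> Basis \<Longrightarrow> \<iota> b *v x = lf b *\<^sub>R x" by metis
  define a where "a = (\<Sum>b\<in>Basis. lf b *\<^sub>R b)"
  have "\<iota> v *v x = complex_of_real (a \<bullet> v) *s x" for v
  proof -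
    have "\<iota> v *v x = (\<Sum>b\<in>Basis. (v \<bullet> b) *\<^sub>R (\<iota> b *v x))"
      by (subst iota_expansion) (simp add: matrix_vector_mult_sum_left
          matrix_vector_mult_scaleR_left)
    also have "\<dots> = (\<Sum>b\<in>Basis. (v \<bullet> b) * lf b) *\<^sub>R x"
      by (simp add: lf scaleR_sum_left)
    also have "(\<Sum>b\<in>Basis. (v \<bullet> b) * lf b) = a \<bullet> v"
      by (simp add: a_def inner_sum_right mult.commute inner_commute)
    finally show ?thesis by (simp add: scaleR_eq_of_real_scaleC)
  qed
  then show ?thesis using xU x0 by (auto simp: weight_space_iff)
qed

text \<open>The orthogonal complement of the span of all weight vectors is invariant under the
  Hermitian \<open>\<iota> v\<close>, so it would contain a weight vector unless it is zero.\<close>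

lemma span_weight_spaces: "x \<in> span (\<Union>a. H a)"
proof -
  define S0 where "S0 = (\<Union>a. H a)"
  obtain y z where y: "y \<in> span S0" and z: "\<And>w. w \<in> span S0 \<Longrightarrow> orthogonal z w"
    and xyz: "x = y + z"
    using orthogonal_subspace_decomp_exists[of S0 x] by blast
  define U where "U = {z. \<forall>w\<in>span S0. orthogonal w z}"
  have sU: "subspace U" unfolding U_def by (rule subspace_orthogonal_to_vectors)
  have "(\<lambda>x. \<iota> v *v x) ` S0 \<subseteq> S0" for v
  proof
    fix y assume "y \<in> (\<lambda>x. \<iota> v *v x) ` S0"
    then obtain x a where "x \<in> H a" and "y = \<iota> v *v x" unfolding S0_def by blast
    then have "y = complex_of_real (a \<bullet> v) *s x" by (simp add: weight_space_iff)
    then have "y \<in> H a" using \<open>x \<in> H a\<close> weight_space_scaleC by simp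
    then show "y \<in> S0" unfolding S0_def by blast
  qed
  then have "span ((\<lambda>x. \<iota> v *v x) ` S0) \<subseteq> span S0" for v by (rule span_mono)
  then have span_inv: "\<iota> v *v w \<in> span S0" if "w \<in> span S0" for v w
    using span_linear_image[of "\<lambda>x. \<iota> v *v x" S0] that by auto
  have inv: "\<iota> v *v u \<in> U" if "u \<in> U" for v u
    unfolding U_def
  proof (intro CollectI ballI)
    fix w assume "w \<in> span S0"
    then have "inner (\<iota> v *v w) u = 0" using that span_inv unfolding U_def orthogonal_def by blast
    then show "orthogonal w (\<iota> v *v u)" by (simp add: orthogonal_def herm_inner[OF herm_iota])
  qed
  have zU: "z \<in> U" using z unfolding U_def by (simp add: orthogonal_commute)
  have "z = 0"
  proof (rule ccontr)
    assume "z \<noteq> 0"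
    then obtain u a where u: "u \<in> U" "u \<noteq> 0" "u \<in> H a"
      using weight_vector_in_invariant_subspace[OF sU zU _ inv] by blast
    then have "u \<in> span S0" unfolding S0_def by (auto intro: span_base)
    then show False using u unfolding U_def by (auto simp: orthogonal_def)
  qed
  then show ?thesis using y xyz S0_def by simp
qed

lemma weight_decomposition_exists: "\<exists>\<psi>. (\<forall>a\<in>\<Omega>. \<psi> a \<in> H a) \<and> x = (\<Sum>a\<in>\<Omega>. \<psi> a)"
  using span_weight_spaces[of x]
proof (induction rule: span_induct_alt)
  case base
  show ?case using zero_in_weight_space by (intro exI[of _ "\<lambda>_. 0"]) auto
next
  case (step c z y)
  then obtain b where z: "z \<in> H b" by blast
  obtain \<psi> where \<psi>: "\<forall>a\<in>\<Omega>. \<psi> a \<in> H a" "y = (\<Sum>a\<in>\<Omega>. \<psi> a)" using step.IH by blast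
  show ?case
  proof (cases "b \<in> \<Omega>")
    case True
    define \<phi> where "\<phi> a = (if a = b then c *\<^sub>R z else 0) + \<psi> a" for a
    have "\<forall>a\<in>\<Omega>. \<phi> a \<in> H a"
      using z \<psi>(1) subspace_weight_space zero_in_weight_space
      by (auto simp: \<phi>_def subspace_add subspace_scale)
    moreover have "c *\<^sub>R z + y = (\<Sum>a\<in>\<Omega>. \<phi> a)"
      using True finite_weights by (simp add: \<phi>_def \<psi>(2) sum.distrib)
    ultimately show ?thesis by blast
  next
    case False
    then have "z = 0" using z weights_iff by blast
    then show ?thesis using \<psi> by auto
  qed
qed

lemma weight_decomposition_unique:
  assumes "\<forall>a\<in>\<Omega>. \<psi> a \<in> H a" and "\<forall>a\<in>\<Omega>. \<phi> a \<in> H a"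
    and "(\<Sum>a\<in>\<Omega>. \<psi> a) = (\<Sum>a\<in>\<Omega>. \<phi> a)" and b: "b \<in> \<Omega>"
  shows "\<psi> b = \<phi> b"
proof -
  define d where "d a = \<psi> a - \<phi> a" for a
  have dH: "d a \<in> H a" if "a \<in> \<Omega>" for a
    using assms(1,2) that subspace_weight_space by (simp add: d_def subspace_diff)
  have "(\<Sum>a\<in>\<Omega>. d a) = 0" using assms(3) by (simp add: d_def sum_subtractf)
  then have "0 = (\<Sum>a\<in>\<Omega>. cinner (d a) (d b))" by (simp add: cinner_sum_left[symmetric])
  also have "\<dots> = (\<Sum>a\<in>\<Omega>. if a = b then cinner (d b) (d b) else 0)"
  proof (intro sum.cong refl)
    fix a assume "a \<in> \<Omega>"
    then show "cinner (d a) (d b) = (if a = b then cinner (d b) (d b) else 0)"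
      using weight_spaces_orthogonal[OF dH dH[OF b]] by auto
  qed
  also have "\<dots> = cinner (d b) (d b)" using b finite_weights by (simp add: sum.delta)
  finally show ?thesis by (simp add: cinner_self_eq_0 d_def)
qed

definition weight_component :: "complex^'n \<Rightarrow> 'v \<Rightarrow> complex^'n" where
  "weight_component x = (SOME \<psi>. (\<forall>a\<in>\<Omega>. \<psi> a \<in> H a) \<and> x = (\<Sum>a\<in>\<Omega>. \<psi> a))"

lemma weight_component_spec: "(\<forall>a\<in>\<Omega>. weight_component x a \<in> H a) \<and> x = (\<Sum>a\<in>\<Omega>. weight_component x a)"
  unfolding weight_component_def by (fact someI_ex[OF weight_decomposition_exists])

definition weight_proj :: "'v \<Rightarrow> complex^'n^'n" where
  "weight_proj a = (\<chi> i k. weight_component (axis k 1) a $ i)"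

lemma weight_proj_in_weight_space: "a \<in> \<Omega> \<Longrightarrow> weight_proj a *v x \<in> H a"
proof -
  assume a: "a \<in> \<Omega>"
  have "weight_proj a *v x = weight_proj a *v (\<Sum>k\<in>UNIV. x$k *s axis k 1)"
    by (simp add: basis_expansion)
  also have "\<dots> = (\<Sum>k\<in>UNIV. x$k *s weight_component (axis k 1) a)"
    by (simp add: matrix_vector_mult_sum_right vector_scalar_commute weight_proj_def vec_eq_iff
        matrix_vector_mult_axis)
  finally show ?thesis using weight_component_spec a subspace_weight_space
    by (auto intro!: subspace_sum weight_space_scaleC)
qed

lemma sum_weight_proj: "(\<Sum>a\<in>\<Omega>. weight_proj a) = mat 1"
proof -
  have "(\<Sum>a\<in>\<Omega>. weight_proj a) $ i $ k = mat 1 $ i $ k" for i k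
  proof -
    have "(\<Sum>a\<in>\<Omega>. weight_proj a) $ i $ k = ((\<Sum>a\<in>\<Omega>. weight_proj a) *v axis k 1) $ i"
      by (simp add: matrix_vector_mult_axis)
    also have "\<dots> = axis k 1 $ i"
      using weight_component_spec[of "axis k 1"]
      by (simp add: matrix_vector_mult_sum_left weight_proj_def vec_eq_iff matrix_vector_mult_axis)
    finally show ?thesis by (simp add: mat_def axis_def)
  qed
  then show ?thesis by (simp add: vec_eq_iff)
qed

lemma weight_proj_decomposition: "x = (\<Sum>a\<in>\<Omega>. weight_proj a *v x)"
  using sum_weight_proj by (metis matrix_vector_mul_lid matrix_vector_mult_sum_left)

lemma weight_proj_on_weight_space:
  assumes "a \<in> \<Omega>" and "b \<in> \<Omega>" and "x \<in> H b"
  shows "weight_proj a *v x = (if a = b then x else 0)"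
proof (rule weight_decomposition_unique[where \<psi>="\<lambda>a. weight_proj a *v x", OF _ _ _ assms(1)])
  show "\<forall>a\<in>\<Omega>. weight_proj a *v x \<in> H a" using weight_proj_in_weight_space by blast
  show "\<forall>a\<in>\<Omega>. (if a = b then x else 0) \<in> H a" using assms(3) zero_in_weight_space by auto
  show "(\<Sum>a\<in>\<Omega>. weight_proj a *v x) = (\<Sum>a\<in>\<Omega>. if a = b then x else 0)"
    using assms(2) finite_weights weight_proj_decomposition[of x] by (simp add: sum.delta)
qed

lemma weight_proj_idem: "a \<in> \<Omega> \<Longrightarrow> weight_proj a ** weight_proj a = weight_proj a"
  by (simp add: matrix_eq matrix_vector_mul_assoc[symmetric] weight_proj_on_weight_space
      weight_proj_in_weight_space)

lemma herm_weight_proj: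
  assumes a: "a \<in> \<Omega>"
  shows "herm (weight_proj a)"
proof -
  have cinner_proj: "cinner y (weight_proj a *v x) = cinner (weight_proj a *v y) (weight_proj a
      *v x)"
    for x y
  proof -
    have "cinner y (weight_proj a *v x) = (\<Sum>b\<in>\<Omega>. cinner (weight_proj b *v y) (weight_proj a *v x))"
      by (subst weight_proj_decomposition[of y]) (simp add: cinner_sum_left)
    also have "\<dots> = (\<Sum>b\<in>\<Omega>. if b = a then cinner (weight_proj a *v y) (weight_proj a *v x) else 0)"
      using a by (intro sum.cong) (auto intro: weight_spaces_orthogonal weight_proj_in_weight_space)
    finally show ?thesis using a finite_weights by (simp add: sum.delta)
  qed
  have "cadj (weight_proj a) = weight_proj a"
  proof (rule matrix_eq_cinner)
    fix x y
    have "cinner y (cadj (weight_proj a) *v x) = cnj (cinner x (weight_proj a *v y))"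
      by (simp add: cinner_cadj cnj_cinner)
    also have "\<dots> = cinner y (weight_proj a *v x)"
      by (simp add: cinner_proj[of y] cinner_proj[of x] cnj_cinner)
    finally show "cinner y (cadj (weight_proj a) *v x) = cinner y (weight_proj a *v x)" .
  qed
  then show ?thesis by (simp add: herm_def)
qed

lemma iota_spectral: "\<iota> v = (\<Sum>a\<in>\<Omega>. (a \<bullet> v) *\<^sub>R weight_proj a)"
proof -
  have "\<iota> v *v x = (\<Sum>a\<in>\<Omega>. (a \<bullet> v) *\<^sub>R weight_proj a) *v x" for x
  proof -
    have "\<iota> v *v x = (\<Sum>a\<in>\<Omega>. \<iota> v *v (weight_proj a *v x))"
      by (subst weight_proj_decomposition[of x]) (simp add: matrix_vector_mult_sum_right)
    also have "\<dots> = (\<Sum>a\<in>\<Omega>. (a \<bullet> v) *\<^sub>R (weight_proj a *v x))"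
      using weight_proj_in_weight_space
      by (intro sum.cong) (auto simp: weight_space_iff scaleR_eq_of_real_scaleC)
    finally show ?thesis by (simp add: matrix_vector_mult_sum_left matrix_vector_mult_scaleR_left)
  qed
  then show ?thesis by (simp add: matrix_eq)
qed

lemma weights_nonempty: "\<Omega> \<noteq> {}"
  using sum_weight_proj mat_1_neq_0 by auto

lemma iota_vimage_span_one: "\<iota> -` span {mat 1} = {v. \<exists>c. \<forall>a\<in>\<Omega>. a \<bullet> v = c}"
proof (intro set_eqI iffI)
  fix v assume "v \<in> \<iota> -` span {mat 1}"
  then obtain c where c: "\<iota> v = c *\<^sub>R mat 1" by (auto simp: span_singleton)
  have "a \<bullet> v = c" if a: "a \<in> \<Omega>" for a
  proof -
    obtain x where x: "x \<in> H a" "x \<noteq> 0" using a weights_iff by blast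
    have "\<iota> v *v x = complex_of_real (a \<bullet> v) *s x" using x by (simp add: weight_space_iff)
    moreover have "\<iota> v *v x = complex_of_real c *s x"
      using c by (simp add: matrix_vector_mult_scaleR_left scaleR_eq_of_real_scaleC)
    ultimately show ?thesis using x(2) by simp
  qed
  then show "v \<in> {v. \<exists>c. \<forall>a\<in>\<Omega>. a \<bullet> v = c}" by blast
next
  fix v assume "v \<in> {v. \<exists>c. \<forall>a\<in>\<Omega>. a \<bullet> v = c}"
  then obtain c where "\<And>a. a \<in> \<Omega> \<Longrightarrow> a \<bullet> v = c" by blast
  then have "\<iota> v = c *\<^sub>R mat 1"
    by (simp add: iota_spectral scaleR_sum_right[symmetric] sum_weight_proj)
  then show "v \<in> \<iota> -` span {mat 1}" by (auto simp: span_singleton)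
qed

definition weight_prob :: "complex^'n^'n \<Rightarrow> 'v \<Rightarrow> real" where
  "weight_prob G a = Re (trace (G ** weight_proj a))"

lemma iota_star_eq_convex_combination: "iota_star \<iota> G = (\<Sum>a\<in>\<Omega>. weight_prob G a *\<^sub>R a)"
proof -
  have "iota_star \<iota> G = (\<Sum>b\<in>Basis. (\<Sum>a\<in>\<Omega>. (a \<bullet> b) * weight_prob G a) *\<^sub>R b)"
    by (simp add: iota_star_def iota_spectral matrix_mult_sum_right matrix_mult_scaleR_right
        trace_sum trace_scaleR Re_sum weight_prob_def)
  also have "\<dots> = (\<Sum>a\<in>\<Omega>. weight_prob G a *\<^sub>R (\<Sum>b\<in>Basis. (a \<bullet> b) *\<^sub>R b))"
    by (simp add: scaleR_sum_left scaleR_sum_right sum.swap[of _ Basis] mult.commute)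
  finally show ?thesis by (simp add: euclidean_representation)
qed

lemma trace_mult_weight_proj:
  assumes "a \<in> \<Omega>"
  shows "trace (G ** weight_proj a) = (\<Sum>k\<in>UNIV. qform G (weight_proj a *v axis k 1))"
proof -
  have "trace (G ** weight_proj a) = trace ((G ** weight_proj a) ** weight_proj a)"
    using weight_proj_idem[OF assms] by (simp add: matrix_mul_assoc[symmetric])
  also have "\<dots> = trace (weight_proj a ** (G ** weight_proj a))" by (rule trace_mul_sym)
  also have "\<dots> = trace (cadj (weight_proj a) ** G ** weight_proj a)"
    using herm_weight_proj[OF assms] by (simp add: herm_def matrix_mul_assoc)
  finally show ?thesis by (simp add: trace_sandwich)
qed

lemma weight_prob_nonneg: "density_op G \<Longrightarrow> a \<in> \<Omega> \<Longrightarrow> 0 \<le> weight_prob G a"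
  unfolding weight_prob_def by (auto simp: trace_mult_weight_proj Re_sum density_op_def intro:
      sum_nonneg)

lemma sum_weight_prob: "density_op G \<Longrightarrow> (\<Sum>a\<in>\<Omega>. weight_prob G a) = 1"
  by (simp add: weight_prob_def Re_sum[symmetric] trace_sum[symmetric]
      matrix_mult_sum_right[symmetric]
      sum_weight_proj density_op_def)

lemma mult_weight_proj_eq_0_if_weight_prob_eq_0:
  assumes G: "density_op G" and a: "a \<in> \<Omega>" and zero: "weight_prob G a = 0"
  shows "G ** weight_proj a = 0"
proof -
  have "\<forall>k\<in>UNIV. Re (qform G (weight_proj a *v axis k 1)) = 0"
    using zero G unfolding weight_prob_def trace_mult_weight_proj[OF a] Re_sum density_op_def
    by (subst sum_nonneg_eq_0_iff[symmetric]) auto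
  then have "G *v (weight_proj a *v axis k 1) = 0" for k
    using G by (intro psd_kernel_if_inner_zero[OF _ subspace_UNIV])
      (auto simp: density_op_def density_op_inner_nonneg inner_cinner qform_cinner)
  then show ?thesis
    by (simp add: vec_eq_iff) (metis matrix_vector_mul_assoc matrix_vector_mult_axis zero_index)
qed

definition spectral_proj :: "'v set \<Rightarrow> complex^'n^'n" where
  "spectral_proj S = (\<Sum>a\<in>\<Omega> \<inter> S. weight_proj a)"

lemma herm_spectral_proj: "herm (spectral_proj S)"
  unfolding herm_def spectral_proj_def cadj_sum
  using herm_weight_proj by (auto simp: herm_def intro: sum.cong)

lemma spectral_proj_on_weight_space:
  assumes "a \<in> \<Omega>" and "x \<in> H a"
  shows "spectral_proj S *v x = (if a \<in> S then x else 0)"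
proof -
  have "spectral_proj S *v x = (\<Sum>c\<in>\<Omega> \<inter> S. if c = a then x else 0)"
    unfolding spectral_proj_def matrix_vector_mult_sum_left
    using weight_proj_on_weight_space[OF _ assms] by (intro sum.cong) auto
  also have "\<dots> = (if a \<in> S then x else 0)" using finite_weights assms(1) by (simp add: sum.delta)
  finally show ?thesis .
qed

lemma spectral_proj_mult_weight_proj:
  "a \<in> \<Omega> \<Longrightarrow> spectral_proj S ** weight_proj a = (if a \<in> S then weight_proj a else 0)"
  by (simp add: matrix_eq matrix_vector_mul_assoc[symmetric] spectral_proj_on_weight_space
      weight_proj_in_weight_space)

lemma weight_proj_mult_spectral_proj:
  assumes "a \<in> \<Omega>"
  shows "weight_proj a ** spectral_proj S = (if a \<in> S then weight_proj a else 0)"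
proof -
  have "weight_proj a ** spectral_proj S = cadj (spectral_proj S ** weight_proj a)"
    using herm_spectral_proj herm_weight_proj[OF assms] by (simp add: cadj_mult herm_def)
  then show ?thesis
    using herm_weight_proj[OF assms] by (simp add: spectral_proj_mult_weight_proj[OF assms]
        herm_def)
qed

lemma spectral_proj_idem: "spectral_proj S ** spectral_proj S = spectral_proj S"
proof -
  have "spectral_proj S ** spectral_proj S = (\<Sum>a\<in>\<Omega> \<inter> S. spectral_proj S ** weight_proj a)"
    by (subst (2) spectral_proj_def) (rule matrix_mult_sum_right)
  also have "\<dots> = spectral_proj S"
    by (simp add: spectral_proj_mult_weight_proj) (simp add: spectral_proj_def)
  finally show ?thesis .
qed

lemma spectral_proj_commute: "spectral_proj S ** \<iota> v = \<iota> v ** spectral_proj S"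
  by (simp add: iota_spectral matrix_mult_sum_right matrix_mult_sum_left matrix_mult_scaleR_right
      scalar_matrix_assoc[symmetric] spectral_proj_mult_weight_proj weight_proj_mult_spectral_proj
      cong: sum.cong)

lemma facet_space_eq_fixed_points: "facet_space \<iota> S = {x. spectral_proj S *v x = x}"
proof (intro set_eqI iffI)
  fix x assume "x \<in> facet_space \<iota> S"
  then obtain \<psi> where \<psi>: "\<forall>a\<in>\<Omega> \<inter> S. \<psi> a \<in> H a" and x: "x = (\<Sum>a\<in>\<Omega> \<inter> S. \<psi> a)"
    by (auto simp: facet_space_def)
  have "spectral_proj S *v x = (\<Sum>a\<in>\<Omega> \<inter> S. spectral_proj S *v \<psi> a)"
    by (simp add: x matrix_vector_mult_sum_right)
  also have "\<dots> = x" unfolding x using \<psi> spectral_proj_on_weight_space by (intro sum.cong) auto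
  finally show "x \<in> {x. spectral_proj S *v x = x}" by simp
next
  fix x assume "x \<in> {x. spectral_proj S *v x = x}"
  then have "x = (\<Sum>a\<in>\<Omega> \<inter> S. weight_proj a *v x)"
    by (simp add: spectral_proj_def matrix_vector_mult_sum_left)
  then show "x \<in> facet_space \<iota> S" unfolding facet_space_def using weight_proj_in_weight_space by
      blast
qed

lemma range_spectral_proj: "range (\<lambda>x. spectral_proj S *v x) = facet_space \<iota> S"
proof -
  have "spectral_proj S *v (spectral_proj S *v y) = spectral_proj S *v y" for y
    by (simp add: matrix_vector_mul_assoc spectral_proj_idem)
  then show ?thesis by (auto simp: facet_space_eq_fixed_points) (metis rangeI)
qed

lemma weight_prob_outside_zero_iff:
  assumes G: "density_op G"
  shows "(\<forall>a\<in>\<Omega> - S. weight_prob G a = 0) \<longleftrightarrow> G = spectral_proj S ** G ** spectral_proj S"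
proof
  assume "\<forall>a\<in>\<Omega> - S. weight_prob G a = 0"
  then have "G ** weight_proj a = 0" if "a \<in> \<Omega> - S" for a
    using mult_weight_proj_eq_0_if_weight_prob_eq_0[OF G] that by blast
  then have "G ** spectral_proj S = (\<Sum>a\<in>\<Omega>. G ** weight_proj a)"
    unfolding spectral_proj_def matrix_mult_sum_right
    by (intro sum.mono_neutral_left) (auto simp: finite_weights)
  then have GQ: "G ** spectral_proj S = G"
    by (simp add: matrix_mult_sum_right[symmetric] sum_weight_proj)
  moreover have "spectral_proj S ** G = G"
    using GQ G herm_spectral_proj by (metis cadj_mult density_op_def herm_def)
  ultimately show "G = spectral_proj S ** G ** spectral_proj S" by (simp add: matrix_mul_assoc)
next
  assume fixed: "G = spectral_proj S ** G ** spectral_proj S"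
  show "\<forall>a\<in>\<Omega> - S. weight_prob G a = 0"
  proof
    fix a assume a: "a \<in> \<Omega> - S"
    have "G ** weight_proj a = spectral_proj S ** G ** (spectral_proj S ** weight_proj a)"
      by (subst fixed) (simp add: matrix_mul_assoc)
    then show "weight_prob G a = 0"
      using a by (simp add: spectral_proj_mult_weight_proj weight_prob_def trace_def)
  qed
qed

lemma iota_star_in_face_iff:
  assumes "F face_of convex hull \<Omega>" and "density_op G"
  shows "iota_star \<iota> G \<in> F \<longleftrightarrow> G = spectral_proj F ** G ** spectral_proj F"
  using convex_combination_in_face_iff[OF finite_weights assms(1)] weight_prob_nonneg[OF assms(2)]
    sum_weight_prob[OF assms(2)] weight_prob_outside_zero_iff[OF assms(2)]
  by (simp add: iota_star_eq_convex_combination)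

end

section \<open>Compression to the weights of a subset\<close>

locale weight_compression = abelian_hermitian_map \<iota> for \<iota> :: "'v::euclidean_space \<Rightarrow> complex^'n^'n" +
  fixes F :: "'v set" and Pj :: "complex^'n^'m"
  assumes coisometry: "Pj ** cadj Pj = mat 1"
    and range_cadj: "range (\<lambda>x. cadj Pj *v x) = facet_space \<iota> F"
begin

abbreviation \<iota>F where "\<iota>F \<equiv> (\<lambda>v. Pj ** \<iota> v ** cadj Pj)"

lemma cadj_mult_eq_spectral_proj: "cadj Pj ** Pj = spectral_proj F"
proof (rule herm_eq_if_mutually_absorbing)
  show "herm (cadj Pj ** Pj)" by (simp add: herm_def cadj_mult)
  show "herm (spectral_proj F)" by (rule herm_spectral_proj)
  have "cadj Pj ** Pj *v (cadj Pj *v x) = cadj Pj *v x" for x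
    by (simp add: matrix_vector_mul_assoc matrix_mul_assoc[symmetric] coisometry)
  then show "cadj Pj ** Pj ** spectral_proj F = spectral_proj F"
    using range_spectral_proj[of F] range_cadj
    by (simp add: matrix_eq matrix_vector_mul_assoc[symmetric]) (metis rangeE rangeI)
  have "spectral_proj F *v (cadj Pj *v x) = cadj Pj *v x" for x
    using range_cadj by (auto simp: facet_space_eq_fixed_points)
  then show "spectral_proj F ** (cadj Pj ** Pj) = cadj Pj ** Pj"
    by (simp add: matrix_eq matrix_vector_mul_assoc[symmetric])
qed

lemma Pj_mult_spectral_proj: "Pj ** spectral_proj F = Pj"
  by (simp add: cadj_mult_eq_spectral_proj[symmetric] matrix_mul_assoc coisometry)

lemma spectral_proj_mult_cadj: "spectral_proj F ** cadj Pj = cadj Pj"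
  by (simp add: cadj_mult_eq_spectral_proj[symmetric] matrix_mul_assoc[symmetric] coisometry)

lemma compression_mult: "\<iota>F v ** \<iota>F w = Pj ** (\<iota> v ** \<iota> w) ** cadj Pj"
proof -
  have "\<iota>F v ** \<iota>F w = Pj ** \<iota> v ** (spectral_proj F ** \<iota> w) ** cadj Pj"
    by (simp add: cadj_mult_eq_spectral_proj[symmetric] matrix_mul_assoc)
  also have "\<dots> = Pj ** \<iota> v ** \<iota> w ** (spectral_proj F ** cadj Pj)"
    by (simp add: spectral_proj_commute matrix_mul_assoc)
  finally show ?thesis by (simp add: spectral_proj_mult_cadj matrix_mul_assoc)
qed

lemma abelian_hermitian_map_compression: "abelian_hermitian_map \<iota>F"
proof -
  have "linear \<iota>F"
    unfolding linear_iff
    by (simp add: linear_add[OF linear_iota] linear_cmul[OF linear_iota] matrix_add_ldistrib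
        matrix_add_rdistrib matrix_mult_scaleR_right scalar_matrix_assoc[symmetric])
  moreover have "herm (Pj ** \<iota> v ** cadj Pj)" for v by (rule herm_sandwich[OF herm_iota])
  moreover have "abelian \<iota>F" by (simp add: abelian_def compression_mult iota_commute)
  ultimately show ?thesis by (simp add: abelian_hermitian_map_def)
qed

lemma Pj_cadj_vector [simp]: "Pj *v (cadj Pj *v x) = x"
  by (simp add: matrix_vector_mul_assoc coisometry)

lemma cadj_intertwines: "cadj Pj *v (\<iota>F v *v x) = \<iota> v *v (cadj Pj *v x)"
proof -
  have "cadj Pj ** \<iota>F v = spectral_proj F ** \<iota> v ** cadj Pj"
    by (simp add: matrix_mul_assoc cadj_mult_eq_spectral_proj)
  also have "\<dots> = \<iota> v ** cadj Pj"
    by (simp add: spectral_proj_commute matrix_mul_assoc[symmetric] spectral_proj_mult_cadj)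
  finally show ?thesis by (simp add: matrix_vector_mul_assoc)
qed

lemma weight_space_compression: "x \<in> weight_space \<iota>F a \<longleftrightarrow> cadj Pj *v x \<in> H a"
proof
  assume "x \<in> weight_space \<iota>F a"
  then show "cadj Pj *v x \<in> H a"
    by (simp add: weight_space_def weight_space_iff cadj_intertwines[symmetric]
        vector_scalar_commute)
next
  assume x: "cadj Pj *v x \<in> H a"
  have "\<iota>F v *v x = Pj *v (\<iota> v *v (cadj Pj *v x))" for v
    by (metis Pj_cadj_vector cadj_intertwines)
  then show "x \<in> weight_space \<iota>F a"
    using x by (simp add: weight_space_def weight_space_iff vector_scalar_commute)
qed

lemma weights_compression: "weights \<iota>F = \<Omega> \<inter> F"
proof (intro set_eqI iffI)
  fix a assume "a \<in> weights \<iota>F"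
  then obtain x where x: "x \<in> weight_space \<iota>F a" "x \<noteq> 0"
    using abelian_hermitian_map.weights_iff[OF abelian_hermitian_map_compression] by blast
  then have \<psi>: "cadj Pj *v x \<in> H a" "cadj Pj *v x \<noteq> 0"
    using weight_space_compression Pj_cadj_vector[of x] by (auto simp del: Pj_cadj_vector)
  then have a: "a \<in> \<Omega>" using weights_iff by blast
  have "spectral_proj F *v (cadj Pj *v x) = cadj Pj *v x"
    by (simp add: matrix_vector_mul_assoc spectral_proj_mult_cadj)
  then have "a \<in> F" using spectral_proj_on_weight_space[OF a \<psi>(1)] \<psi>(2) by (auto split: if_splits)
  then show "a \<in> \<Omega> \<inter> F" using a by blast
next
  fix a assume a: "a \<in> \<Omega> \<inter> F"
  then obtain \<psi> where \<psi>: "\<psi> \<in> H a" "\<psi> \<noteq> 0" using weights_iff by blast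
  have "cadj Pj *v (Pj *v \<psi>) = \<psi>"
    using spectral_proj_on_weight_space[OF _ \<psi>(1)] a
    by (simp add: matrix_vector_mul_assoc cadj_mult_eq_spectral_proj)
  then have "Pj *v \<psi> \<in> weight_space \<iota>F a" "Pj *v \<psi> \<noteq> 0"
    using \<psi> weight_space_compression by auto
  then show "a \<in> weights \<iota>F"
    using abelian_hermitian_map.weights_iff[OF abelian_hermitian_map_compression] by blast
qed

lemma dim_compression_vimage_span_one:
  assumes "F facet_of convex hull \<Omega>"
  shows "dim (\<iota>F -` span {mat 1}) = dim (\<iota> -` span {mat 1}) + 1"
proof -
  have "\<Omega> \<inter> F \<noteq> {}"
    using assms face_of_convex_hull_finite[OF finite_weights facet_of_imp_face_of[OF assms]]
    by (auto simp: facet_of_def)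
  then have "int (dim (\<iota>F -` span {mat 1})) = int DIM('v) - aff_dim (\<Omega> \<inter> F)"
    using abelian_hermitian_map.iota_vimage_span_one[OF abelian_hermitian_map_compression]
    by (simp add: weights_compression dim_inner_constant_on)
  also have "\<dots> = int (dim (\<iota> -` span {mat 1})) + 1"
    using aff_dim_facet_of_convex_hull[OF finite_weights assms] weights_nonempty
    by (simp add: iota_vimage_span_one dim_inner_constant_on)
  finally show ?thesis by simp
qed

lemma lift_compress_eq:
  "G = spectral_proj F ** G ** spectral_proj F \<Longrightarrow> cadj Pj ** (Pj ** G ** cadj Pj) ** Pj = G"
  by (simp add: cadj_mult_eq_spectral_proj[symmetric] matrix_mul_assoc)

lemma spectral_proj_sandwich_lift:
  "spectral_proj F ** (cadj Pj ** G ** Pj) ** spectral_proj F = cadj Pj ** G ** Pj"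
  by (simp add: matrix_mul_assoc spectral_proj_mult_cadj)
    (simp add: matrix_mul_assoc[symmetric] Pj_mult_spectral_proj)

lemma trace_compress:
  assumes "G = spectral_proj F ** G ** spectral_proj F"
  shows "trace (Pj ** G ** cadj Pj) = trace G"
proof -
  have "trace (Pj ** G ** cadj Pj) = trace ((G ** cadj Pj) ** Pj)"
    using trace_mul_sym[of Pj "G ** cadj Pj"] by (simp add: matrix_mul_assoc)
  also have "\<dots> = trace (G ** spectral_proj F)"
    by (simp only: matrix_mul_assoc[symmetric] cadj_mult_eq_spectral_proj)
  also have "G ** spectral_proj F = spectral_proj F ** G ** (spectral_proj F ** spectral_proj F)"
    by (subst assms) (simp add: matrix_mul_assoc)
  also have "\<dots> = G" by (simp add: spectral_proj_idem assms[symmetric])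
  finally show ?thesis .
qed

end

locale face_compression = weight_compression +
  assumes face: "F face_of convex hull (weights \<iota>)"
begin

lemma density_op_iota_star_in_face_iff:
  assumes G: "density_op G"
  shows "iota_star \<iota> G \<in> F \<longleftrightarrow> (\<exists>G'. G = cadj Pj ** G' ** Pj \<and> density_op G')"
proof
  assume "iota_star \<iota> G \<in> F"
  then have fixed: "G = spectral_proj F ** G ** spectral_proj F"
    using iota_star_in_face_iff[OF face G] by blast
  have "density_op (Pj ** G ** cadj Pj)"
    using G unfolding density_op_def
    by (simp add: herm_sandwich trace_compress[OF fixed] qform_sandwich[of "cadj Pj", simplified])
  then show "\<exists>G'. G = cadj Pj ** G' ** Pj \<and> density_op G'"
    using lift_compress_eq[OF fixed] by metis
next
  assume "\<exists>G'. G = cadj Pj ** G' ** Pj \<and> density_op G'"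
  then show "iota_star \<iota> G \<in> F"
    using iota_star_in_face_iff[OF face G] spectral_proj_sandwich_lift by auto
qed

lemma pure_state_iota_star_in_face_iff:
  assumes G: "pure_state G"
  shows "iota_star \<iota> G \<in> F \<longleftrightarrow> (\<exists>G'. G = cadj Pj ** G' ** Pj \<and> pure_state G')"
proof
  assume "iota_star \<iota> G \<in> F"
  then have fixed: "G = spectral_proj F ** G ** spectral_proj F"
    using iota_star_in_face_iff[OF face pure_state_imp_density_op[OF G]] by blast
  obtain \<psi> where \<psi>: "cnorm2 \<psi> = 1" "G = ketbra \<psi>" using G by (auto simp: pure_state_def)
  have "complex_of_real (cnorm2 (Pj *v \<psi>)) = trace (Pj ** G ** cadj Pj)"
    by (simp add: \<psi>(2) ketbra_sandwich trace_ketbra)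
  also have "\<dots> = trace G" by (rule trace_compress[OF fixed])
  also have "\<dots> = 1" by (simp add: \<psi> trace_ketbra)
  finally have "pure_state (Pj ** G ** cadj Pj)"
    by (auto simp: pure_state_def \<psi>(2) ketbra_sandwich)
  then show "\<exists>G'. G = cadj Pj ** G' ** Pj \<and> pure_state G'"
    using lift_compress_eq[OF fixed] by metis
next
  assume "\<exists>G'. G = cadj Pj ** G' ** Pj \<and> pure_state G'"
  then show "iota_star \<iota> G \<in> F"
    using iota_star_in_face_iff[OF face pure_state_imp_density_op[OF G]]
        spectral_proj_sandwich_lift by auto
qed

end

section \<open>Restricted functionals\<close>

lemma Inf_lift_eq:
  fixes f :: "'a \<Rightarrow> 'c::complete_lattice"
  assumes lift: "\<And>y. Q y \<Longrightarrow> P (lift y)"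
    and onto: "\<And>x. P x \<Longrightarrow> g x \<in> F \<longleftrightarrow> (\<exists>y. x = lift y \<and> Q y)"
  shows "Inf {f (lift y) | y. Q y \<and> g (lift y) = \<rho>}
    = (if \<rho> \<in> F then Inf {f x | x. P x \<and> g x = \<rho>} else top)"
proof (cases "\<rho> \<in> F")
  case True
  then have "{f (lift y) | y. Q y \<and> g (lift y) = \<rho>} = {f x | x. P x \<and> g x = \<rho>}"
    using lift onto by (auto 0 4)
  then show ?thesis using True by simp
next
  case False
  then have "{f (lift y) | y. Q y \<and> g (lift y) = \<rho>} = {}"
    using lift onto by blast
  then show ?thesis using False by (simp only: Inf_empty if_False)
qed

context face_compression
begin

lemma Fp_compression: "Fp \<iota>F (Pj ** W ** cadj Pj) = (\<lambda>\<rho>. if \<rho> \<in> F then Fp \<iota> W \<rho> else \<infinity>)"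
proof
  fix \<rho>
  show "Fp \<iota>F (Pj ** W ** cadj Pj) \<rho> = (if \<rho> \<in> F then Fp \<iota> W \<rho> else \<infinity>)"
    unfolding Fp_def iota_star_compression trace_sandwich_cycle[symmetric] top_ereal_def[symmetric]
    by (rule Inf_lift_eq[where P=pure_state, OF pure_state_lift_coisometry[OF coisometry]
          pure_state_iota_star_in_face_iff])
qed

lemma Fe_compression: "Fe \<iota>F (Pj ** W ** cadj Pj) = (\<lambda>\<rho>. if \<rho> \<in> F then Fe \<iota> W \<rho> else \<infinity>)"
proof
  fix \<rho>
  show "Fe \<iota>F (Pj ** W ** cadj Pj) \<rho> = (if \<rho> \<in> F then Fe \<iota> W \<rho> else \<infinity>)"
    unfolding Fe_def iota_star_compression trace_sandwich_cycle[symmetric] top_ereal_def[symmetric]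
    by (rule Inf_lift_eq[where P=density_op, OF density_op_lift_coisometry[OF coisometry]
          density_op_iota_star_in_face_iff])
qed

end

theorem proposition4p11:
  fixes \<iota> :: "'v::euclidean_space \<Rightarrow> complex^'n^'n"
    and W :: "complex^'n^'n"
    and F :: "'v set"
    and Pj :: "complex^'n^'m"
  assumes thy: "functional_theory \<iota> W"
    and ab: "abelian \<iota>"
    and facet: "F facet_of convex hull (weights \<iota>)"
    and Pi_coiso: "Pj ** cadj Pj = mat 1"
    and Pi_range: "range (\<lambda>x. cadj Pj *v x) = facet_space \<iota> F"
  defines "\<iota>F \<equiv> (\<lambda>v. Pj ** \<iota> v ** cadj Pj)"
    and "WF \<equiv> Pj ** W ** cadj Pj"
    and "PF \<equiv> {cadj Pj ** G ** Pj | G. pure_state G}"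
    and "EF \<equiv> {cadj Pj ** G ** Pj | G. density_op G}"
  shows "functional_theory \<iota>F WF
    \<and> abelian \<iota>F
    \<and> weights \<iota>F = weights \<iota> \<inter> F
    \<and> dim (\<iota>F -` span {mat 1}) = dim (\<iota> -` span {mat 1}) + 1
    \<and> (\<forall>G. pure_state G \<longrightarrow> (iota_star \<iota> G \<in> F \<longleftrightarrow> G \<in> PF))
    \<and> (\<forall>G. density_op G \<longrightarrow> (iota_star \<iota> G \<in> F \<longleftrightarrow> G \<in> EF))
    \<and> Fp \<iota>F WF = (\<lambda>\<rho>. if \<rho> \<in> F then Fp \<iota> W \<rho> else \<infinity>)
    \<and> Fe \<iota>F WF = (\<lambda>\<rho>. if \<rho> \<in> F then Fe \<iota> W \<rho> else \<infinity>)"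
proof -
  have "abelian_hermitian_map \<iota>"
    using thy ab by (simp add: abelian_hermitian_map_def functional_theory_def)
  then interpret face_compression \<iota> F Pj
    using facet Pi_coiso Pi_range
    by (simp add: face_compression_def weight_compression_def weight_compression_axioms_def
        face_compression_axioms_def facet_of_imp_face_of)
  interpret restricted: abelian_hermitian_map \<iota>F
    unfolding \<iota>F_def by (rule abelian_hermitian_map_compression)
  have "herm WF" using thy by (simp add: functional_theory_def WF_def herm_sandwich)
  then show ?thesis
    using restricted.linear_iota restricted.herm_iota restricted.abelian_iota
      weights_compression dim_compression_vimage_span_one[OF facet]
      pure_state_iota_star_in_face_iff density_op_iota_star_in_face_iff Fp_compression
          Fe_compression
    unfolding \<iota>F_def WF_def PF_def EF_def functional_theory_def by blast
qed

end
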